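(* Let $\mathcal{X}=\bigsqcup_{j=1}^m\mathcal{X}_j$ be a finite partitioned set, $T$ a block-invariant row-stochastic matrix on $\mathcal{X}$, $p_0\in\mathcal{P}(\mathcal{X})$, and $p_{n+1}=p_nT$ for $n=0,\dots,N-1$. Set $q_n:=p_nT$, $D_n:=D_{\mathrm{KL}}(p_n\|q_n)$, $\Delta V_n:=V(p_n)-V(p_{n+1})$, and $\mathcal{S}_n:=D_n+\Delta V_n$, where $V$ is the KL potential relative to $p_0$, and assume $V(p_0)<\infty$. Then $\mathcal{S}_n\ge 0$ for every $n=0,1,\dots,N-1$, and consequently $$\mathcal{S}^{[0:N)}:=\sum_{n=0}^{N-1}\mathcal{S}_n=\sum_{n=0}^{N-1}D_n+V(p_0)-V(p_N)\ \ge 0.$$ Moreover $\mathcal{S}_n=0$ if and only if $D_n=0$ and $\Delta V_n=0$.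
   Context: $\mathcal{P}(\mathcal{X})$ is the set of probability distributions (row vectors) on $\mathcal{X}$. Block invariance: $\sum_{y\in\mathcal{X}_j}T(x,y)=1$ for all $x\in\mathcal{X}_j$, all $j$. $T_j$ is the restriction of $T$ to block $\mathcal{X}_j$, $\mathcal{I}_j=\{\pi\in\mathcal{P}(\mathcal{X}_j):\pi T_j=\pi\}$, $w_j(p)=\sum_{x\in\mathcal{X}_j}p(x)$, $\Pi(p_0)=\{\sum_j w_j(p_0)\pi_j:\pi_j\in\mathcal{I}_j\}$ (each $\pi_j$ extended by zero outside $\mathcal{X}_j$), and the KL potential is $V(p)=\inf_{\pi\in\Pi(p_0)}D_{\mathrm{KL}}(p\|\pi)$. $D_{\mathrm{KL}}(p\|q)=\sum_x p(x)\log\frac{p(x)}{q(x)}$ with $0\log(0/q)=0$, $p\log(p/0)=+\infty$ for $p>0$. *)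

theory Defs
  imports "HOL-Analysis.Analysis"
begin

text \<open>The partition into blocks
X_1, ..., X_m is given by a block-label function blk, X_j = {x. blk x = j}.\<close>

definition is_dist :: "('a::finite \<Rightarrow> real) \<Rightarrow> bool" where
  "is_dist p \<longleftrightarrow> (\<forall>x. 0 \<le> p x) \<and> (\<Sum>x\<in>UNIV. p x) = 1"

definition row_stochastic :: "('a::finite \<Rightarrow> 'a \<Rightarrow> real) \<Rightarrow> bool" where
  "row_stochastic T \<longleftrightarrow> (\<forall>x y. 0 \<le> T x y) \<and> (\<forall>x. (\<Sum>y\<in>UNIV. T x y) = 1)"

definition block :: "('a \<Rightarrow> nat) \<Rightarrow> nat \<Rightarrow> 'a set" where
  "block blk j = {x. blk x = j}"

definition block_partition :: "('a \<Rightarrow> nat) \<Rightarrow> nat \<Rightarrow> bool" where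
  "block_partition blk m \<longleftrightarrow> (\<forall>x. blk x \<in> {1..m}) \<and> (\<forall>j\<in>{1..m}. block blk j \<noteq> {})"

definition block_invariant :: "('a::finite \<Rightarrow> nat) \<Rightarrow> nat \<Rightarrow> ('a \<Rightarrow> 'a \<Rightarrow> real) \<Rightarrow> bool" where
  "block_invariant blk m T \<longleftrightarrow>
     (\<forall>j\<in>{1..m}. \<forall>x\<in>block blk j. (\<Sum>y\<in>block blk j. T x y) = 1)"

definition vecmat :: "('a::finite \<Rightarrow> real) \<Rightarrow> ('a \<Rightarrow> 'a \<Rightarrow> real) \<Rightarrow> 'a \<Rightarrow> real" where
  "vecmat p T = (\<lambda>y. \<Sum>x\<in>UNIV. p x * T x y)"

definition KL :: "('a::finite \<Rightarrow> real) \<Rightarrow> ('a \<Rightarrow> real) \<Rightarrow> ereal" where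
  "KL p q = (if (\<exists>x. p x > 0 \<and> q x = 0) then \<infinity>
             else ereal (\<Sum>x\<in>{x. p x > 0}. p x * ln (p x / q x)))"

definition wblk :: "('a::finite \<Rightarrow> nat) \<Rightarrow> nat \<Rightarrow> ('a \<Rightarrow> real) \<Rightarrow> real" where
  "wblk blk j p = (\<Sum>x\<in>block blk j. p x)"

text \<open>I_j: distributions on X_j (extended by zero) invariant under the restriction T_j.\<close>
definition inv_blk :: "('a::finite \<Rightarrow> nat) \<Rightarrow> ('a \<Rightarrow> 'a \<Rightarrow> real) \<Rightarrow> nat \<Rightarrow> ('a \<Rightarrow> real) set" where
  "inv_blk blk T j = {\<pi>. (\<forall>x. 0 \<le> \<pi> x) \<and> (\<forall>x. x \<notin> block blk j \<longrightarrow> \<pi> x = 0)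
        \<and> (\<Sum>x\<in>block blk j. \<pi> x) = 1
        \<and> (\<forall>y\<in>block blk j. (\<Sum>x\<in>block blk j. \<pi> x * T x y) = \<pi> y)}"

definition Pi_set :: "('a::finite \<Rightarrow> nat) \<Rightarrow> nat \<Rightarrow> ('a \<Rightarrow> 'a \<Rightarrow> real) \<Rightarrow> ('a \<Rightarrow> real) \<Rightarrow> ('a \<Rightarrow> real) set" where
  "Pi_set blk m T p0 = {(\<lambda>x. \<Sum>j\<in>{1..m}. wblk blk j p0 * \<pi>s j x) | \<pi>s.
        \<forall>j\<in>{1..m}. \<pi>s j \<in> inv_blk blk T j}"

definition Vpot :: "('a::finite \<Rightarrow> nat) \<Rightarrow> nat \<Rightarrow> ('a \<Rightarrow> 'a \<Rightarrow> real) \<Rightarrow> ('a \<Rightarrow> real) \<Rightarrow> ('a \<Rightarrow> real) \<Rightarrow> ereal" where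
  "Vpot blk m T p0 p = (INF \<pi>\<in>Pi_set blk m T p0. KL p \<pi>)"

end

(*
  Every reference law \<pi> in \<Pi>(p_0) is stationary for T: block invariance makes T vanish from
  X_j to its complement, so each invariant law of T_j, extended by zero, is invariant for T.
  For a stationary \<pi> the data processing inequality KL(pT || \<pi>) <= KL(p || \<pi>) is Gibbs'
  inequality for the joint law p(x) T(x,y) against \<pi>(x) T(x,y) (pT)(y) / \<pi>(y), which
  stationarity makes a sub-probability; its divergence is KL(p || \<pi>) - KL(pT || \<pi>). Taking the
  infimum over \<Pi>(p_0), V decreases along the chain. Gibbs' inequality also gives D_n >= 0 and
  V >= 0, and V(p_0) < \<infinity> keeps every V(p_n) finite, so the decrements of V are nonnegative
  reals that telescope.
*)
theory Submission
  imports Defs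
begin

lemma mult_ln_div_ge_diff:
  fixes a b :: real
  assumes "0 < a" "0 < b"
  shows "a - b \<le> a * ln (a / b)"
proof -
  have "ln (b / a) \<le> b / a - 1"
    using assms by (intro ln_le_minus_one) simp
  then have "1 - b / a \<le> ln (a / b)"
    using assms by (simp add: ln_div)
  then have "a * (1 - b / a) \<le> a * ln (a / b)"
    using assms by (intro mult_left_mono) auto
  moreover have "a * (1 - b / a) = a - b"
    using assms by (simp add: field_simps)
  ultimately show ?thesis by simp
qed

lemma KL_eq_sum:
  assumes "\<And>x. 0 \<le> p x" and "\<And>x. 0 < p x \<Longrightarrow> q x \<noteq> 0"
  shows "KL p q = ereal (\<Sum>x\<in>UNIV. p x * ln (p x / q x))"
proof -
  have "(\<Sum>x\<in>{x. 0 < p x}. p x * ln (p x / q x)) = (\<Sum>x\<in>UNIV. p x * ln (p x / q x))"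
    by (rule sum.mono_neutral_left) (use assms(1) in \<open>auto simp: less_eq_real_def\<close>)
  then show ?thesis
    using assms(2) by (auto simp: KL_def)
qed

lemma KL_nonneg:
  assumes p: "is_dist p" and q: "\<And>x. 0 \<le> q x" and q_mass: "sum q UNIV \<le> 1"
  shows "0 \<le> KL p q"
proof (cases "\<exists>x. 0 < p x \<and> q x = 0")
  case True
  then show ?thesis by (simp add: KL_def)
next
  case False
  have p_nonneg: "\<And>x. 0 \<le> p x" and p_mass: "sum p UNIV = 1"
    using p by (auto simp: is_dist_def)
  have "p x - q x \<le> p x * ln (p x / q x)" for x
  proof (cases "p x = 0")
    case False
    then show ?thesis
      using \<open>\<not> (\<exists>x. 0 < p x \<and> q x = 0)\<close> p_nonneg[of x] q[of x]
      by (intro mult_ln_div_ge_diff) (auto simp: less_eq_real_def)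
  qed (simp add: q)
  then have "(\<Sum>x\<in>UNIV. p x - q x) \<le> (\<Sum>x\<in>UNIV. p x * ln (p x / q x))"
    by (rule sum_mono)
  then show ?thesis
    using False p_nonneg p_mass q_mass by (subst KL_eq_sum) (auto simp: sum_subtractf)
qed

lemma is_dist_vecmat:
  assumes "is_dist p" "row_stochastic T"
  shows "is_dist (vecmat p T)"
proof -
  have "(\<Sum>y\<in>UNIV. \<Sum>x\<in>UNIV. p x * T x y) = (\<Sum>x\<in>UNIV. p x * (\<Sum>y\<in>UNIV. T x y))"
    by (subst sum.swap) (simp add: sum_distrib_left)
  also have "\<dots> = 1"
    using assms by (simp add: is_dist_def row_stochastic_def)
  finally show ?thesis
    using assms unfolding is_dist_def row_stochastic_def vecmat_def by (auto intro!: sum_nonneg)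
qed

lemma vecmat_pos_imp_pos:
  assumes "\<And>x. 0 \<le> p x" "\<And>x y. 0 \<le> T x y" "0 < p x" "0 < T x y"
  shows "0 < vecmat p T y"
proof -
  have "p x * T x y \<le> (\<Sum>x\<in>UNIV. p x * T x y)"
    by (rule member_le_sum) (auto intro: mult_nonneg_nonneg assms(1,2))
  moreover have "0 < p x * T x y"
    using assms(3,4) by simp
  ultimately show ?thesis
    by (simp add: vecmat_def)
qed

lemma vecmat_posE:
  assumes "\<And>x. 0 \<le> p x" "\<And>x y. 0 \<le> T x y" "0 < vecmat p T y"
  obtains x where "0 < p x" "0 < T x y"
proof -
  have "\<exists>x. 0 < p x * T x y"
  proof (rule ccontr)
    assume "\<nexists>x. 0 < p x * T x y"
    then have "vecmat p T y \<le> 0"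
      unfolding vecmat_def by (intro sum_nonpos) (simp add: not_less)
    with assms(3) show False by simp
  qed
  then show ?thesis
    using that assms(1,2) by (metis less_eq_real_def mult_zero_left mult_zero_right)
qed

lemma sum_UNIV_prod:
  "(\<Sum>z\<in>UNIV. f z) = (\<Sum>x\<in>UNIV. \<Sum>y\<in>UNIV. f (x, y))"
  by (simp add: sum.cartesian_product)

lemma is_dist_joint:
  assumes "is_dist p" "row_stochastic T"
  shows "is_dist (\<lambda>(x, y). p x * T x y)"
  using assms
  by (auto simp: is_dist_def row_stochastic_def sum_UNIV_prod simp flip: sum_distrib_left)

lemma stationary_pos_step:
  assumes "\<And>x. 0 \<le> \<pi> x" "row_stochastic T" "vecmat \<pi> T = \<pi>" "0 < \<pi> x" "0 < T x y"
  shows "0 < \<pi> y"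
  using vecmat_pos_imp_pos[of \<pi> T x y] assms by (simp add: row_stochastic_def)

lemma stationary_pos_vecmat:
  assumes p: "is_dist p" and T: "row_stochastic T" and \<pi>: "\<And>x. 0 \<le> \<pi> x"
    and stationary: "vecmat \<pi> T = \<pi>" and dom: "\<And>x. 0 < p x \<Longrightarrow> 0 < \<pi> x"
    and pos: "0 < vecmat p T y"
  shows "0 < \<pi> y"
proof -
  obtain x where "0 < p x" "0 < T x y"
    using vecmat_posE[of p T y] p T pos by (auto simp: is_dist_def row_stochastic_def)
  then show ?thesis
    using stationary_pos_step[OF \<pi> T stationary] dom by blast
qed

lemma sum_stationary_reweight_le:
  assumes stationary: "vecmat \<pi> T = \<pi>" and r: "\<And>y. 0 \<le> r y"
  shows "(\<Sum>z\<in>UNIV. (\<lambda>(x, y). \<pi> x * T x y * r y / \<pi> y) z) \<le> sum r UNIV"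
proof -
  have "(\<Sum>z\<in>UNIV. (\<lambda>(x, y). \<pi> x * T x y * r y / \<pi> y) z)
      = (\<Sum>y\<in>UNIV. \<Sum>x\<in>UNIV. \<pi> x * T x y * (r y / \<pi> y))"
    unfolding sum_UNIV_prod by (subst sum.swap) simp
  also have "\<dots> = (\<Sum>y\<in>UNIV. vecmat \<pi> T y * (r y / \<pi> y))"
    by (simp add: vecmat_def sum_distrib_right sum_divide_distrib)
  also have "\<dots> = (\<Sum>y\<in>UNIV. r y / \<pi> y * \<pi> y)"
    using stationary by (simp add: mult.commute)
  also have "\<dots> \<le> sum r UNIV"
    \<comment> \<open>equality where \<open>\<pi> y > 0\<close>; where \<open>\<pi> y = 0\<close> the term vanishes as \<open>r y / 0 = 0\<close>\<close>
    using r by (intro sum_mono) (simp add: divide_le_eq)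
  finally show ?thesis .
qed

lemma ln_joint_ratio:
  fixes a t s b c :: real
  assumes "0 < a" "0 < t" "0 < s" "0 < b" "0 < c"
  shows "a * t * ln (a * t / (s * t * c / b)) = a * t * ln (a / s) - a * t * ln (c / b)"
  using assms by (simp add: ln_div ln_mult algebra_simps)

lemma stationary_joint_support:
  assumes p: "is_dist p" and T: "row_stochastic T" and \<pi>: "\<And>x. 0 \<le> \<pi> x"
    and stationary: "vecmat \<pi> T = \<pi>" and dom: "\<And>x. 0 < p x \<Longrightarrow> 0 < \<pi> x"
    and pos: "0 < p x * T x y"
  shows "0 < p x \<and> 0 < T x y \<and> 0 < \<pi> x \<and> 0 < \<pi> y \<and> 0 < vecmat p T y"
proof -
  have p_nonneg: "\<And>x. 0 \<le> p x" and T_nonneg: "\<And>x y. 0 \<le> T x y"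
    using p T by (auto simp: is_dist_def row_stochastic_def)
  have "0 < p x" "0 < T x y"
    using pos p_nonneg[of x] T_nonneg[of x y] by (auto simp: zero_less_mult_iff)
  then show ?thesis
    using dom stationary_pos_step[OF \<pi> T stationary] vecmat_pos_imp_pos[of p T x y]
      p_nonneg T_nonneg by auto
qed

lemma KL_joint_stationary:
  assumes p: "is_dist p" and T: "row_stochastic T" and \<pi>: "\<And>x. 0 \<le> \<pi> x"
    and stationary: "vecmat \<pi> T = \<pi>" and dom: "\<And>x. 0 < p x \<Longrightarrow> 0 < \<pi> x"
  defines "r \<equiv> vecmat p T"
  shows "KL (\<lambda>(x, y). p x * T x y) (\<lambda>(x, y). \<pi> x * T x y * r y / \<pi> y)
       = ereal ((\<Sum>x\<in>UNIV. p x * ln (p x / \<pi> x)) - (\<Sum>y\<in>UNIV. r y * ln (r y / \<pi> y)))"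
proof -
  have p_nonneg: "\<And>x. 0 \<le> p x" and T_nonneg: "\<And>x y. 0 \<le> T x y"
    and T_rows: "\<And>x. (\<Sum>y\<in>UNIV. T x y) = 1"
    using p T by (auto simp: is_dist_def row_stochastic_def)
  have support: "0 < p x \<and> 0 < T x y \<and> 0 < \<pi> x \<and> 0 < \<pi> y \<and> 0 < r y"
    if "0 < p x * T x y" for x y
    using stationary_joint_support[OF p T \<pi> stationary dom that] by (simp add: r_def)
  have log_ratio: "p x * T x y * ln (p x * T x y / (\<pi> x * T x y * r y / \<pi> y))
      = p x * T x y * ln (p x / \<pi> x) - p x * T x y * ln (r y / \<pi> y)" for x y
  proof (cases "0 < p x * T x y")
    case True
    then show ?thesis
      using support[OF True] by (intro ln_joint_ratio) auto
  next
    case False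
    then have "p x * T x y = 0"
      using mult_nonneg_nonneg[OF p_nonneg[of x] T_nonneg[of x y]] by linarith
    then show ?thesis by auto
  qed
  define P where "P = (\<lambda>(x, y). p x * T x y)"
  define Q where "Q = (\<lambda>(x, y). \<pi> x * T x y * r y / \<pi> y)"
  have "KL P Q = ereal (\<Sum>z\<in>UNIV. P z * ln (P z / Q z))"
  proof (rule KL_eq_sum)
    show "0 \<le> P z" for z
      using p_nonneg T_nonneg by (cases z) (simp add: P_def)
    show "Q z \<noteq> 0" if "0 < P z" for z
    proof (cases z)
      case (Pair x y)
      with that support[of x y] show ?thesis by (simp add: P_def Q_def)
    qed
  qed
  also have "\<dots> = ereal (\<Sum>x\<in>UNIV. \<Sum>y\<in>UNIV.
      p x * T x y * ln (p x / \<pi> x) - p x * T x y * ln (r y / \<pi> y))"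
    by (simp only: sum_UNIV_prod P_def Q_def case_prod_conv log_ratio)
  also have "\<dots> = ereal ((\<Sum>x\<in>UNIV. p x * ln (p x / \<pi> x)) - (\<Sum>y\<in>UNIV. r y * ln (r y / \<pi> y)))"
  proof -
    have "(\<Sum>x\<in>UNIV. \<Sum>y\<in>UNIV. p x * T x y * ln (p x / \<pi> x))
        = (\<Sum>x\<in>UNIV. p x * ln (p x / \<pi> x))"
      by (intro sum.cong refl) (simp add: T_rows flip: sum_distrib_right sum_distrib_left)
    moreover have "(\<Sum>x\<in>UNIV. \<Sum>y\<in>UNIV. p x * T x y * ln (r y / \<pi> y))
        = (\<Sum>y\<in>UNIV. r y * ln (r y / \<pi> y))"
      by (subst sum.swap) (simp add: r_def vecmat_def sum_distrib_right)
    ultimately show ?thesis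
      by (simp only: sum_subtractf)
  qed
  finally show ?thesis
    unfolding P_def Q_def .
qed

lemma KL_vecmat_stationary_le:
  assumes p: "is_dist p" and T: "row_stochastic T"
    and \<pi>: "\<And>x. 0 \<le> \<pi> x" and stationary: "vecmat \<pi> T = \<pi>"
  shows "KL (vecmat p T) \<pi> \<le> KL p \<pi>"
proof (cases "\<exists>x. 0 < p x \<and> \<pi> x = 0")
  case True
  then show ?thesis by (simp add: KL_def)
next
  case False
  then have dom: "0 < \<pi> x" if "0 < p x" for x
    using \<pi>[of x] that by (auto simp: less_eq_real_def)
  define r where "r = vecmat p T"
  have r_dist: "is_dist r"
    unfolding r_def using p T by (rule is_dist_vecmat)
  have "0 \<le> KL (\<lambda>(x, y). p x * T x y) (\<lambda>(x, y). \<pi> x * T x y * r y / \<pi> y)"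
  proof (rule KL_nonneg[OF is_dist_joint[OF p T]])
    show "0 \<le> (\<lambda>(x, y). \<pi> x * T x y * r y / \<pi> y) z" for z
      using \<pi> T r_dist by (cases z) (simp add: is_dist_def row_stochastic_def)
    show "(\<Sum>z\<in>UNIV. (\<lambda>(x, y). \<pi> x * T x y * r y / \<pi> y) z) \<le> 1"
      using sum_stationary_reweight_le[OF stationary, of r] r_dist by (simp add: is_dist_def)
  qed
  moreover have "KL p \<pi> = ereal (\<Sum>x\<in>UNIV. p x * ln (p x / \<pi> x))"
    using p by (intro KL_eq_sum) (auto simp: is_dist_def dest: dom)
  moreover have "KL r \<pi> = ereal (\<Sum>y\<in>UNIV. r y * ln (r y / \<pi> y))"
  proof (rule KL_eq_sum)
    show "0 \<le> r y" for y
      using r_dist by (simp add: is_dist_def)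
    show "\<pi> y \<noteq> 0" if "0 < r y" for y
      using stationary_pos_vecmat[OF p T \<pi> stationary dom, of y] that by (simp add: r_def)
  qed
  ultimately show ?thesis
    using KL_joint_stationary[OF p T \<pi> stationary dom] by (simp add: r_def)
qed

lemma block_invariant_exit_zero:
  assumes stoch: "row_stochastic T" and binv: "block_invariant blk m T"
    and j: "j \<in> {1..m}" and x: "x \<in> block blk j" and y: "y \<notin> block blk j"
  shows "T x y = 0"
proof -
  have "(\<Sum>y\<in>block blk j. T x y) = 1" "(\<Sum>y\<in>UNIV. T x y) = 1"
    using binv stoch j x by (auto simp: block_invariant_def row_stochastic_def)
  then have "(\<Sum>y\<in>UNIV - block blk j. T x y) = 0"
    using sum.subset_diff[of "block blk j" UNIV "T x"] by simp
  then show ?thesis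
    using stoch y by (subst (asm) sum_nonneg_eq_0_iff) (auto simp: row_stochastic_def)
qed

lemma inv_blk_stationary:
  assumes stoch: "row_stochastic T" and binv: "block_invariant blk m T"
    and j: "j \<in> {1..m}" and \<pi>: "\<pi> \<in> inv_blk blk T j"
  shows "vecmat \<pi> T = \<pi>"
proof
  fix y
  have outside: "\<pi> x = 0" if "x \<notin> block blk j" for x
    using \<pi> that by (simp add: inv_blk_def)
  have "vecmat \<pi> T y = (\<Sum>x\<in>block blk j. \<pi> x * T x y)"
    unfolding vecmat_def by (rule sum.mono_neutral_right) (auto simp: outside)
  also have "\<dots> = \<pi> y"
  proof (cases "y \<in> block blk j")
    case True
    then show ?thesis using \<pi> by (simp add: inv_blk_def)
  next
    case False
    then show ?thesis
      using block_invariant_exit_zero[OF stoch binv j _ False] outside by simp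
  qed
  finally show "vecmat \<pi> T y = \<pi> y" .
qed

lemma sum_wblk:
  assumes "block_partition blk m"
  shows "(\<Sum>j\<in>{1..m}. wblk blk j p) = sum p UNIV"
proof -
  have "blk ` UNIV \<subseteq> {1..m}"
    using assms by (auto simp: block_partition_def)
  then show ?thesis
    using sum.group[of UNIV "{1..m}" blk p] by (simp add: wblk_def block_def)
qed

lemma is_dist_Pi_set:
  assumes part: "block_partition blk m" and p0: "is_dist p0"
    and \<pi>: "\<pi> \<in> Pi_set blk m T p0"
  shows "is_dist \<pi>"
proof -
  obtain \<pi>s where \<pi>_eq: "\<pi> = (\<lambda>x. \<Sum>j\<in>{1..m}. wblk blk j p0 * \<pi>s j x)"
    and \<pi>s: "\<forall>j\<in>{1..m}. \<pi>s j \<in> inv_blk blk T j"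
    using \<pi> unfolding Pi_set_def by blast
  have w_nonneg: "0 \<le> wblk blk j p0" for j
    using p0 unfolding wblk_def is_dist_def by (simp add: sum_nonneg)
  have \<pi>_nonneg: "0 \<le> \<pi> x" for x
    unfolding \<pi>_eq using w_nonneg \<pi>s
    by (intro sum_nonneg mult_nonneg_nonneg) (auto simp: inv_blk_def)
  have \<pi>s_mass: "sum (\<pi>s j) UNIV = 1" if j: "j \<in> {1..m}" for j
  proof -
    have "sum (\<pi>s j) UNIV = sum (\<pi>s j) (block blk j)"
      by (rule sum.mono_neutral_right) (use \<pi>s j in \<open>auto simp: inv_blk_def\<close>)
    then show ?thesis
      using \<pi>s j by (simp add: inv_blk_def)
  qed
  have "sum \<pi> UNIV = (\<Sum>j\<in>{1..m}. wblk blk j p0 * sum (\<pi>s j) UNIV)"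
    unfolding \<pi>_eq by (subst sum.swap) (simp add: sum_distrib_left)
  also have "\<dots> = sum p0 UNIV"
    using \<pi>s_mass sum_wblk[OF part] by simp
  finally show ?thesis
    using p0 \<pi>_nonneg by (simp add: is_dist_def)
qed

lemma vecmat_Pi_set:
  assumes stoch: "row_stochastic T" and binv: "block_invariant blk m T"
    and \<pi>: "\<pi> \<in> Pi_set blk m T p0"
  shows "vecmat \<pi> T = \<pi>"
proof -
  obtain \<pi>s where \<pi>_eq: "\<pi> = (\<lambda>x. \<Sum>j\<in>{1..m}. wblk blk j p0 * \<pi>s j x)"
    and \<pi>s: "\<forall>j\<in>{1..m}. \<pi>s j \<in> inv_blk blk T j"
    using \<pi> unfolding Pi_set_def by blast
  have "vecmat \<pi> T y = (\<Sum>j\<in>{1..m}. wblk blk j p0 * vecmat (\<pi>s j) T y)" for y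
    unfolding \<pi>_eq vecmat_def sum_distrib_right sum_distrib_left
    by (subst sum.swap) (simp add: mult_ac)
  then show ?thesis
    using inv_blk_stationary[OF stoch binv] \<pi>s by (simp add: \<pi>_eq fun_eq_iff)
qed

lemma Vpot_nonneg:
  assumes "block_partition blk m" "is_dist p0" "is_dist q"
  shows "0 \<le> Vpot blk m T p0 q"
  unfolding Vpot_def
proof (rule INF_greatest)
  fix \<pi> assume "\<pi> \<in> Pi_set blk m T p0"
  then have "is_dist \<pi>"
    by (rule is_dist_Pi_set[OF assms(1,2)])
  then show "0 \<le> KL q \<pi>"
    by (intro KL_nonneg[OF assms(3)]) (simp_all add: is_dist_def)
qed

lemma Vpot_vecmat_le:
  assumes part: "block_partition blk m" and stoch: "row_stochastic T"
    and binv: "block_invariant blk m T" and p0: "is_dist p0" and q: "is_dist q"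
  shows "Vpot blk m T p0 (vecmat q T) \<le> Vpot blk m T p0 q"
  unfolding Vpot_def
proof (rule INF_mono)
  fix \<pi> assume \<pi>: "\<pi> \<in> Pi_set blk m T p0"
  have "KL (vecmat q T) \<pi> \<le> KL q \<pi>"
    using is_dist_Pi_set[OF part p0 \<pi>]
    by (intro KL_vecmat_stationary_le[OF q stoch _ vecmat_Pi_set[OF stoch binv \<pi>]])
      (simp add: is_dist_def)
  then show "\<exists>\<pi>'\<in>Pi_set blk m T p0. KL (vecmat q T) \<pi>' \<le> KL q \<pi>"
    using \<pi> by blast
qed

lemma sum_diff_telescope_finite_ereal:
  fixes v :: "nat \<Rightarrow> ereal"
  assumes "\<And>n. n \<le> N \<Longrightarrow> \<bar>v n\<bar> \<noteq> \<infinity>"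
  shows "(\<Sum>n<N. v n - v (Suc n)) = v 0 - v N"
proof -
  define w where "w n = real_of_ereal (v n)" for n
  have v: "v n = ereal (w n)" if "n \<le> N" for n
    using assms[OF that] unfolding w_def by (cases "v n") auto
  have "(\<Sum>n<N. v n - v (Suc n)) = (\<Sum>n<N. ereal (w n - w (Suc n)))"
    by (intro sum.cong) (auto simp: v)
  also have "\<dots> = ereal (w 0 - w N)"
    by (simp add: sum_ereal sum_lessThan_telescope')
  finally show ?thesis by (simp add: v)
qed

lemma decreasing_nonneg_ereal_finite:
  fixes v :: "nat \<Rightarrow> ereal"
  assumes "\<And>n. n \<le> N \<Longrightarrow> 0 \<le> v n" "\<And>n. n < N \<Longrightarrow> v (Suc n) \<le> v n" "v 0 < \<infinity>"
    and "n \<le> N"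
  shows "\<bar>v n\<bar> \<noteq> \<infinity>"
proof -
  have "v n \<le> v 0" using \<open>n \<le> N\<close>
  proof (induction n)
    case (Suc n)
    then show ?case using assms(2)[of n] by simp
  qed simp
  then show ?thesis using assms(1)[OF \<open>n \<le> N\<close>] \<open>v 0 < \<infinity>\<close> by auto
qed

lemma sum_dissipation_balance_ereal:
  fixes d v :: "nat \<Rightarrow> ereal"
  assumes d: "\<And>n. n < N \<Longrightarrow> 0 \<le> d n"
    and v: "\<And>n. n \<le> N \<Longrightarrow> 0 \<le> v n"
    and dec: "\<And>n. n < N \<Longrightarrow> v (Suc n) \<le> v n"
    and v0: "v 0 < \<infinity>"
  shows "(\<forall>n<N. 0 \<le> d n + (v n - v (Suc n)))
       \<and> (\<Sum>n<N. d n + (v n - v (Suc n))) = (\<Sum>n<N. d n) + v 0 - v N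
       \<and> 0 \<le> (\<Sum>n<N. d n + (v n - v (Suc n)))
       \<and> (\<forall>n<N. d n + (v n - v (Suc n)) = 0 \<longleftrightarrow> d n = 0 \<and> v n - v (Suc n) = 0)"
proof -
  have fin: "\<bar>v n\<bar> \<noteq> \<infinity>" if "n \<le> N" for n
    using decreasing_nonneg_ereal_finite[OF v dec v0 that] .
  have dv: "0 \<le> v n - v (Suc n)" if "n < N" for n
    using dec[OF that] fin[of n] fin[of "Suc n"] that by (cases "v n"; cases "v (Suc n)") auto
  have terms: "\<forall>n<N. 0 \<le> d n + (v n - v (Suc n))"
    using d dv by (simp add: add_nonneg_nonneg)
  have "(\<Sum>n<N. d n + (v n - v (Suc n))) = (\<Sum>n<N. d n) + (v 0 - v N)"
    by (simp add: sum.distrib sum_diff_telescope_finite_ereal fin)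
  also have "\<dots> = (\<Sum>n<N. d n) + v 0 - v N"
    using fin[of 0] fin[of N] by (cases "v 0"; cases "v N"; cases "\<Sum>n<N. d n") auto
  finally have balance: "(\<Sum>n<N. d n + (v n - v (Suc n))) = (\<Sum>n<N. d n) + v 0 - v N" .
  have "0 \<le> (\<Sum>n<N. d n + (v n - v (Suc n)))"
    using terms by (intro sum_nonneg) auto
  moreover have "\<forall>n<N. d n + (v n - v (Suc n)) = 0 \<longleftrightarrow> d n = 0 \<and> v n - v (Suc n) = 0"
    using d dv add_nonneg_eq_0_iff by blast
  ultimately show ?thesis
    using terms balance by blast
qed

theorem theorem2:
  fixes blk :: "'a::finite \<Rightarrow> nat" and m N :: nat
    and T :: "'a \<Rightarrow> 'a \<Rightarrow> real" and p :: "nat \<Rightarrow> 'a \<Rightarrow> real"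
  defines "V \<equiv> Vpot blk m T (p 0)"
  defines "D \<equiv> (\<lambda>n. KL (p n) (vecmat (p n) T))"
  defines "\<Delta>V \<equiv> (\<lambda>n. V (p n) - V (p (Suc n)))"
  defines "S \<equiv> (\<lambda>n. D n + \<Delta>V n)"
  assumes part: "block_partition blk m"
    and stoch: "row_stochastic T"
    and binv: "block_invariant blk m T"
    and p0: "is_dist (p 0)"
    and step: "\<forall>n<N. p (Suc n) = vecmat (p n) T"
    and V0: "V (p 0) < \<infinity>"
  shows "(\<forall>n<N. S n \<ge> 0)
       \<and> (\<Sum>n<N. S n) = (\<Sum>n<N. D n) + V (p 0) - V (p N)
       \<and> (\<Sum>n<N. S n) \<ge> 0
       \<and> (\<forall>n<N. S n = 0 \<longleftrightarrow> D n = 0 \<and> \<Delta>V n = 0)"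
proof -
  have dist: "is_dist (p n)" if "n \<le> N" for n
    using that
  proof (induction n)
    case (Suc n)
    then have "p (Suc n) = vecmat (p n) T" "is_dist (p n)"
      using step by simp_all
    then show ?case
      using stoch by (simp add: is_dist_vecmat)
  qed (use p0 in simp)
  have "0 \<le> D n" if "n < N" for n
    unfolding D_def using that dist[of n] is_dist_vecmat[OF dist[of n] stoch]
    by (intro KL_nonneg) (simp_all add: is_dist_def)
  moreover have "0 \<le> V (p n)" if "n \<le> N" for n
    unfolding V_def using part p0 dist[OF that] by (rule Vpot_nonneg)
  moreover have "V (p (Suc n)) \<le> V (p n)" if "n < N" for n
    using Vpot_vecmat_le[OF part stoch binv p0 dist[of n]] step that by (simp add: V_def)
  ultimately show ?thesis
    using V0 unfolding S_def \<Delta>V_def by (rule sum_dissipation_balance_ereal)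
qed

end
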